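(* Let $1\le b<\frac{n}{2}-1$ and let $T$ be a tree attaining the maximum value of $M_2$ over $\mathcal{CT}^*_{n,b}$. Then $T$ has at least one vertex of degree $4$, and the subgraph of $T$ induced by the vertices of degree $4$ is a tree.
   Context: A chemical tree is a tree with maximum degree at most $4$. A branching vertex is a vertex of degree greater than $2$. $\mathcal{CT}^*_{n,b}$ is the class of all $n$-vertex chemical trees with exactly $b$ branching vertices. $M_2(G)=\sum_{uv\in E(G)}d_ud_v$, where $d_v$ is the degree of $v$. *)

theory Defs
  imports Complex_Main
begin

definition simple_graph :: "'a set \<Rightarrow> 'a set set \<Rightarrow> bool" where
  "simple_graph V E \<longleftrightarrow> finite V \<and> (\<forall>e\<in>E. e \<subseteq> V \<and> card e = 2)"

definition adj_rel :: "'a set set \<Rightarrow> ('a \<times> 'a) set" where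
  "adj_rel E = {(u, v). {u, v} \<in> E}"

definition connected_graph :: "'a set \<Rightarrow> 'a set set \<Rightarrow> bool" where
  "connected_graph V E \<longleftrightarrow> (\<forall>u\<in>V. \<forall>v\<in>V. (u, v) \<in> (adj_rel E)\<^sup>*)"

definition is_tree :: "'a set \<Rightarrow> 'a set set \<Rightarrow> bool" where
  "is_tree V E \<longleftrightarrow> simple_graph V E \<and> V \<noteq> {} \<and> connected_graph V E
                   \<and> card E = card V - 1"

definition deg :: "'a set set \<Rightarrow> 'a \<Rightarrow> nat" where
  "deg E v = card {e\<in>E. v \<in> e}"

definition chemical_tree :: "'a set \<Rightarrow> 'a set set \<Rightarrow> bool" where
  "chemical_tree V E \<longleftrightarrow> is_tree V E \<and> (\<forall>v\<in>V. deg E v \<le> 4)"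

definition branching_vertices :: "'a set \<Rightarrow> 'a set set \<Rightarrow> 'a set" where
  "branching_vertices V E = {v\<in>V. deg E v > 2}"

definition CT_star :: "nat \<Rightarrow> nat \<Rightarrow> ('a set \<times> 'a set set) set" where
  "CT_star n b = {(V, E). chemical_tree V E \<and> card V = n \<and> card (branching_vertices V E) = b}"

definition M2 :: "'a set set \<Rightarrow> nat" where
  "M2 E = (\<Sum>e\<in>E. \<Prod>v\<in>e. deg E v)"

definition induced_edges :: "'a set set \<Rightarrow> 'a set \<Rightarrow> 'a set set" where
  "induced_edges E S = {e\<in>E. e \<subseteq> S}"

end

theory Submission
  imports Defs
begin

text \<open>
  Both claims are proved by local edge moves that keep the tree chemical with the same
  branching vertices but strictly increase M2.

  Suppose no vertex has degree 4. If there were no vertex of degree 2 either, the degree sum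
  2(n - 1) would be at most 3b + (n - b), i.e. n \<le> 2b + 2, contradicting b < n/2 - 1. So some
  degree-2 vertex w is adjacent to a degree-3 vertex u; moving the other edge wt of w to ut
  makes u a vertex of degree 4 and increases M2.

  Now root the tree at a vertex r of degree 4. If a degree-4 vertex had a parent of smaller
  degree, walking up towards r yields an edge ab with deg a = 4 > deg b (a the parent of b),
  and below b a deepest degree-4 vertex c with a child d, deg d < 4. Replacing ab, cd by ac,
  bd keeps all degrees and changes M2 by (4 - deg b)(4 - deg d) > 0. Hence the degree-4
  vertices are closed under taking parents, and such a set induces a subtree.
\<close>

section \<open>Simple graphs\<close>

lemma simple_graph_finite_edges: "simple_graph V E \<Longrightarrow> finite E"
  unfolding simple_graph_def by (meson Pow_iff finite_Pow_iff finite_subset subsetI)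

lemma simple_graph_edge_in: "simple_graph V E \<Longrightarrow> {x, y} \<in> E \<Longrightarrow> x \<in> V \<and> y \<in> V"
  unfolding simple_graph_def by auto

lemma simple_graph_edge_neq: "simple_graph V E \<Longrightarrow> {x, y} \<in> E \<Longrightarrow> x \<noteq> y"
  unfolding simple_graph_def by fastforce

lemma simple_graph_edge_at:
  assumes "simple_graph V E" "e \<in> E" "u \<in> e"
  obtains x where "e = {u, x}" "x \<noteq> u" "x \<in> V"
proof -
  from assms have "card e = 2" "e \<subseteq> V" by (auto simp: simple_graph_def)
  then obtain p q where "e = {p, q}" "p \<noteq> q" by (auto simp: card_2_iff)
  then show ?thesis using that assms(3) \<open>e \<subseteq> V\<close> by (auto simp: insert_commute)
qed

lemma deg_pos: "simple_graph V E \<Longrightarrow> {x, y} \<in> E \<Longrightarrow> 0 < deg E x"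
  unfolding deg_def by (subst card_gt_0_iff) (auto dest: simple_graph_finite_edges)

lemma sum_deg_eq_twice_card_edges:
  assumes "simple_graph V E"
  shows "(\<Sum>v\<in>V. deg E v) = 2 * card E"
proof -
  have fin: "finite V" "finite E"
    using assms simple_graph_finite_edges by (auto simp: simple_graph_def)
  have "(\<Sum>v\<in>V. deg E v) = (\<Sum>v\<in>V. \<Sum>e\<in>E. if v \<in> e then 1 else 0)"
    unfolding deg_def using fin by (simp add: sum.inter_filter[symmetric])
  also have "\<dots> = (\<Sum>e\<in>E. \<Sum>v\<in>V. if v \<in> e then 1 else 0)" by (rule sum.swap)
  also have "\<dots> = (\<Sum>e\<in>E. card e)"
  proof (rule sum.cong[OF refl])
    fix e assume "e \<in> E"
    then have "{v\<in>V. v \<in> e} = e" using assms by (auto simp: simple_graph_def)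
    then show "(\<Sum>v\<in>V. if v \<in> e then 1 else 0) = card e"
      using fin by (simp add: sum.inter_filter[symmetric])
  qed
  also have "\<dots> = 2 * card E" using assms by (simp add: simple_graph_def)
  finally show ?thesis .
qed

lemma incident_edges_other:
  assumes "simple_graph V E" "{u, w} \<in> E"
  shows "{e\<in>E. u \<in> e} = insert {u, w} ((\<lambda>x. {u, x}) ` {x. {u, x} \<in> E \<and> x \<noteq> w})"
    and "card {x. {u, x} \<in> E \<and> x \<noteq> w} = deg E u - 1"
proof -
  let ?N = "{x. {u, x} \<in> E \<and> x \<noteq> w}"
  show incident: "{e\<in>E. u \<in> e} = insert {u, w} ((\<lambda>x. {u, x}) ` ?N)"
  proof (intro equalityI subsetI)
    fix e assume "e \<in> {e\<in>E. u \<in> e}"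
    then obtain x where "e \<in> E" "e = {u, x}" using simple_graph_edge_at[OF assms(1)] by blast
    then show "e \<in> insert {u, w} ((\<lambda>x. {u, x}) ` ?N)" by auto
  qed (use assms(2) in auto)
  have "inj_on (\<lambda>x. {u, x}) ?N" by (auto simp: inj_on_def doubleton_eq_iff)
  then have "card ?N = card ((\<lambda>x. {u, x}) ` ?N)" by (simp add: card_image)
  also have "(\<lambda>x. {u, x}) ` ?N = {e\<in>E. u \<in> e} - {{u, w}}"
    unfolding incident by (auto simp: doubleton_eq_iff)
  also have "card \<dots> = deg E u - 1" using assms(2) by (simp add: deg_def)
  finally show "card ?N = deg E u - 1" .
qed

lemma card_incident_eq_sum: "finite F \<Longrightarrow> card {e\<in>F. v \<in> e} = (\<Sum>e\<in>F. if v \<in> e then 1 else 0)"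
  by (simp add: sum.If_cases Int_def conj_commute)

lemma adj_rel_iff [simp]: "(x, y) \<in> adj_rel E \<longleftrightarrow> {x, y} \<in> E"
  by (simp add: adj_rel_def)

lemma adj_rel_rtrancl_sym: "(x, y) \<in> (adj_rel E)\<^sup>* \<Longrightarrow> (y, x) \<in> (adj_rel E)\<^sup>*"
proof -
  have "sym (adj_rel E)" by (auto simp: sym_def insert_commute)
  then show "(x, y) \<in> (adj_rel E)\<^sup>* \<Longrightarrow> (y, x) \<in> (adj_rel E)\<^sup>*"
    using sym_rtrancl unfolding sym_def by blast
qed

lemma adj_rel_rtrancl_doubleton:
  "{x, y} = {p, q} \<Longrightarrow> (p, q) \<in> (adj_rel E)\<^sup>* \<Longrightarrow> (x, y) \<in> (adj_rel E)\<^sup>*"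
  by (auto simp: doubleton_eq_iff intro: adj_rel_rtrancl_sym)

lemma connected_graph_transfer:
  assumes "connected_graph V E"
    and "\<And>e. e \<in> E - E' \<Longrightarrow> \<exists>x y. e = {x, y} \<and> (x, y) \<in> (adj_rel E')\<^sup>*"
  shows "connected_graph V E'"
proof -
  have "adj_rel E \<subseteq> (adj_rel E')\<^sup>*"
  proof (rule subrelI)
    fix p q assume "(p, q) \<in> adj_rel E"
    then show "(p, q) \<in> (adj_rel E')\<^sup>*"
      using assms(2)[of "{p, q}"] adj_rel_rtrancl_doubleton by (cases "{p, q} \<in> E'") auto
  qed
  then have "(adj_rel E)\<^sup>* \<subseteq> (adj_rel E')\<^sup>*" by (rule rtrancl_subset_rtrancl)
  then show ?thesis using assms(1) unfolding connected_graph_def by blast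
qed

lemma connected_graph_crossing_edge:
  assumes "connected_graph V E" "x \<in> V" "y \<in> V" "x \<in> X" "y \<notin> X"
  obtains x' y' where "{x', y'} \<in> E" "x' \<in> X" "y' \<notin> X"
proof -
  have "(x, y) \<in> (adj_rel E)\<^sup>*" using assms(1-3) by (auto simp: connected_graph_def)
  then have "y \<in> X \<or> (\<exists>x' y'. {x', y'} \<in> E \<and> x' \<in> X \<and> y' \<notin> X)"
    by (induction rule: rtrancl_induct) (use assms(4) in auto)
  then show ?thesis using assms(5) that by blast
qed

section \<open>Parents towards a root\<close>

locale rooted_connected_graph =
  fixes V :: "'a set" and E :: "'a set set" and r :: 'a
  assumes simple: "simple_graph V E" and connected: "connected_graph V E" and root_in: "r \<in> V"
begin

definition depth :: "'a \<Rightarrow> nat" where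
  "depth x = (LEAST k. (x, r) \<in> adj_rel E ^^ k)"

definition parent :: "'a \<Rightarrow> 'a" where
  "parent x = (SOME y. {x, y} \<in> E \<and> Suc (depth y) = depth x)"

lemma finite_vertices: "finite V"
  using simple by (simp add: simple_graph_def)

lemma finite_edges: "finite E"
  using simple by (rule simple_graph_finite_edges)

lemma walk_to_root: "x \<in> V \<Longrightarrow> (x, r) \<in> adj_rel E ^^ depth x"
proof -
  assume "x \<in> V"
  then have "(x, r) \<in> (adj_rel E)\<^sup>*" using connected root_in by (auto simp: connected_graph_def)
  then obtain k where "(x, r) \<in> adj_rel E ^^ k" by (auto simp: rtrancl_power)
  then show ?thesis unfolding depth_def by (rule LeastI)
qed

lemma depth_le: "(x, r) \<in> adj_rel E ^^ k \<Longrightarrow> depth x \<le> k"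
  unfolding depth_def by (rule Least_le)

lemma depth_eq_0_iff: "x \<in> V \<Longrightarrow> depth x = 0 \<longleftrightarrow> x = r"
  using walk_to_root[of x] depth_le[of r 0] by auto

lemma exists_parent:
  assumes "x \<in> V" "x \<noteq> r"
  shows "\<exists>y. {x, y} \<in> E \<and> Suc (depth y) = depth x"
proof -
  obtain k where k: "depth x = Suc k"
    using depth_eq_0_iff[OF assms(1)] assms(2) not0_implies_Suc by blast
  with walk_to_root[OF assms(1)] obtain y where y: "(x, y) \<in> adj_rel E" "(y, r) \<in> adj_rel E ^^ k"
    by (metis relpow_Suc_D2)
  have "y \<in> V" using y(1) simple_graph_edge_in[OF simple] by auto
  have "depth x \<le> Suc (depth y)"
    using depth_le relpow_Suc_I2[OF y(1) walk_to_root[OF \<open>y \<in> V\<close>]] by blast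
  moreover have "depth y \<le> k" using depth_le[OF y(2)] .
  ultimately show ?thesis using k y(1) by auto
qed

lemma
  assumes "x \<in> V" "x \<noteq> r"
  shows parent_edge: "{x, parent x} \<in> E"
    and depth_parent: "Suc (depth (parent x)) = depth x"
    and parent_in: "parent x \<in> V"
proof -
  show "{x, parent x} \<in> E" and "Suc (depth (parent x)) = depth x"
    unfolding parent_def using someI_ex[OF exists_parent[OF assms]] by auto
  then show "parent x \<in> V" using simple_graph_edge_in[OF simple] by blast
qed

lemma inj_on_parent_edge: "inj_on (\<lambda>x. {x, parent x}) (V - {r})"
proof (rule inj_onI)
  fix x y assume "x \<in> V - {r}" "y \<in> V - {r}" "{x, parent x} = {y, parent y}"
  then show "x = y"
    using depth_parent[of x] depth_parent[of y] by (auto simp: doubleton_eq_iff)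
qed

lemma card_edges_ge: "card V - 1 \<le> card E"
proof -
  have "card (V - {r}) \<le> card E"
    using card_inj_on_le[OF inj_on_parent_edge _ finite_edges] parent_edge by blast
  then show ?thesis using root_in finite_vertices by simp
qed

end

lemma connected_graph_card_edges_ge:
  "simple_graph V E \<Longrightarrow> connected_graph V E \<Longrightarrow> V \<noteq> {} \<Longrightarrow> card V - 1 \<le> card E"
  by (metis rooted_connected_graph.card_edges_ge rooted_connected_graph.intro equals0I)

lemma is_treeI_card_edges_le:
  "simple_graph V E \<Longrightarrow> connected_graph V E \<Longrightarrow> V \<noteq> {} \<Longrightarrow> card E \<le> card V - 1
    \<Longrightarrow> is_tree V E"
  using connected_graph_card_edges_ge[of V E] unfolding is_tree_def by simp

section \<open>Edge exchanges in trees\<close>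

text \<open>A connected graph on V has at least card V - 1 edges, which forces both conclusions.\<close>

lemma tree_edge_exchange:
  assumes tree: "is_tree V E" and "R \<subseteq> E" "card A \<le> card R"
    and simple': "simple_graph V ((E - R) \<union> A)" and connected': "connected_graph V ((E - R) \<union> A)"
  shows "is_tree V ((E - R) \<union> A)" "(E - R) \<inter> A = {}"
proof -
  have fin: "finite E" "finite A"
    using tree simple' simple_graph_finite_edges by (auto simp: is_tree_def)
  have V: "V \<noteq> {}" "card E = card V - 1" using tree by (auto simp: is_tree_def)
  have "card ((E - R) \<union> A) + card ((E - R) \<inter> A) = card (E - R) + card A"
    using card_Un_Int[of "E - R" A] fin by simp
  also have "\<dots> \<le> card E"
    using assms(2,3) fin card_Diff_subset[of R E] card_mono[of E R] finite_subset by fastforce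
  finally have "card ((E - R) \<union> A) + card ((E - R) \<inter> A) \<le> card V - 1" using V by simp
  moreover have "card V - 1 \<le> card ((E - R) \<union> A)"
    using connected_graph_card_edges_ge[OF simple' connected' V(1)] .
  ultimately have "card ((E - R) \<inter> A) = 0" "card ((E - R) \<union> A) \<le> card V - 1" by linarith+
  then show "is_tree V ((E - R) \<union> A)" "(E - R) \<inter> A = {}"
    using is_treeI_card_edges_le[OF simple' connected' V(1)] fin by auto
qed

lemma deg_edge_exchange:
  assumes "finite E" "finite A" "R \<subseteq> E" "(E - R) \<inter> A = {}"
  shows "deg ((E - R) \<union> A) v + card {e\<in>R. v \<in> e} = deg E v + card {e\<in>A. v \<in> e}"
proof -
  have "deg ((E - R) \<union> A) v = card {e\<in>E - R. v \<in> e} + card {e\<in>A. v \<in> e}"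
    unfolding deg_def using assms
    by (subst card_Un_disjoint[symmetric]) (auto intro: arg_cong[where f = card])
  moreover have "deg E v = card {e\<in>E - R. v \<in> e} + card {e\<in>R. v \<in> e}"
    unfolding deg_def using assms
    by (subst card_Un_disjoint[symmetric]) (auto intro: arg_cong[where f = card] finite_subset)
  ultimately show ?thesis by simp
qed

lemma M2_edge_exchange:
  assumes "finite E" "finite E'" "K \<subseteq> E" "K' \<subseteq> E'" "E - K = E' - K'"
    and "\<And>e v. e \<in> E - K \<Longrightarrow> v \<in> e \<Longrightarrow> deg E' v = deg E v"
  shows "M2 E' + (\<Sum>e\<in>K. \<Prod>v\<in>e. deg E v) = M2 E + (\<Sum>e\<in>K'. \<Prod>v\<in>e. deg E' v)"
proof -
  have "(\<Sum>e\<in>E' - K'. \<Prod>v\<in>e. deg E' v) = (\<Sum>e\<in>E - K. \<Prod>v\<in>e. deg E v)"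
    unfolding assms(5)[symmetric] using assms(6) by (auto intro!: sum.cong prod.cong)
  then show ?thesis
    unfolding M2_def
    using sum.subset_diff[OF assms(3,1), of "prod (deg E)"] sum.subset_diff[OF assms(4,2), of "prod (deg E')"]
    by simp
qed

lemma tree_rotate_edge:
  assumes tree: "is_tree V E" and uw: "{u, w} \<in> E" and wt: "{w, t} \<in> E" "t \<noteq> u"
  defines "E' \<equiv> (E - {{w, t}}) \<union> {{u, t}}"
  shows "is_tree V E'" "{u, t} \<notin> E"
    "deg E' v = (if v = u then Suc (deg E u) else if v = w then deg E w - 1 else deg E v)"
proof -
  have simple: "simple_graph V E" and connected: "connected_graph V E"
    using tree by (auto simp: is_tree_def)
  have "u \<in> V" "t \<in> V" "u \<noteq> w" "t \<noteq> w"
    using simple_graph_edge_in[OF simple] simple_graph_edge_neq[OF simple] uw wt by blast+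
  then have simple': "simple_graph V E'"
    using simple wt(2) unfolding simple_graph_def E'_def by auto
  have "(w, u) \<in> adj_rel E'" "(u, t) \<in> adj_rel E'"
    using uw \<open>u \<noteq> w\<close> wt(2) by (auto simp: E'_def doubleton_eq_iff insert_commute)
  then have "(w, t) \<in> (adj_rel E')\<^sup>*" by (meson r_into_rtrancl rtrancl_into_rtrancl)
  then have connected': "connected_graph V E'"
    by (intro connected_graph_transfer[OF connected]) (auto simp: E'_def)
  have R: "{{w, t}} \<subseteq> E" "card {{u, t}} \<le> card {{w, t}}" using wt(1) by simp_all
  note exchange = tree_edge_exchange[OF tree R simple'[unfolded E'_def] connected'[unfolded E'_def]]
  then show "is_tree V E'" by (simp add: E'_def)
  show "{u, t} \<notin> E" using exchange(2) wt(2) \<open>u \<noteq> w\<close> by (auto simp: doubleton_eq_iff)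
  show "deg E' v = (if v = u then Suc (deg E u) else if v = w then deg E w - 1 else deg E v)"
    using deg_edge_exchange[OF simple_graph_finite_edges[OF simple] _ R(1) exchange(2), of v]
      wt \<open>t \<noteq> w\<close> \<open>u \<noteq> w\<close>
    by (simp only: card_incident_eq_sum finite.intros) (auto simp: E'_def)
qed

lemma M2_rotate_edge:
  assumes tree: "is_tree V E"
    and at_w: "{e\<in>E. w \<in> e} = {{u, w}, {w, t}}" and at_u: "{e\<in>E. u \<in> e} = {{u, w}, {u, a}, {u, c}}"
    and distinct: "distinct [u, w, a, c, t]"
  defines "E' \<equiv> (E - {{w, t}}) \<union> {{u, t}}"
  shows "M2 E' + 2 = M2 E + deg E a + deg E c + 2 * deg E t"
proof -
  have fin: "finite E" using tree simple_graph_finite_edges by (auto simp: is_tree_def)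
  have uw: "{u, w} \<in> E" and wt: "{w, t} \<in> E" and ac: "{u, a} \<in> E" "{u, c} \<in> E"
    using at_w at_u by blast+
  have "t \<noteq> u" using distinct by auto
  note rotate = tree_rotate_edge[OF tree uw wt this, folded E'_def]
  have "deg E w = 2" "deg E u = 3"
    unfolding deg_def at_w at_u using distinct by (auto simp: doubleton_eq_iff)
  then have deg': "deg E' v = (if v = u then 4 else if v = w then 1 else deg E v)" for v
    using rotate(3) by simp
  then have deg'_at: "deg E' u = 4" "deg E' w = 1" "deg E' a = deg E a" "deg E' c = deg E c" "deg E' t = deg E t"
    using distinct by auto
  let ?K = "{{u, w}, {u, a}, {u, c}, {w, t}}" and ?K' = "{{u, w}, {u, a}, {u, c}, {u, t}}"
  have "M2 E' + (\<Sum>e\<in>?K. \<Prod>v\<in>e. deg E v) = M2 E + (\<Sum>e\<in>?K'. \<Prod>v\<in>e. deg E' v)"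
  proof (rule M2_edge_exchange[OF fin])
    show "finite E'" "?K \<subseteq> E" "?K' \<subseteq> E'"
      using fin uw ac wt distinct by (auto simp: E'_def doubleton_eq_iff)
    show "E - ?K = E' - ?K'" using rotate(2) by (auto simp: E'_def)
    show "deg E' v = deg E v" if "e \<in> E - ?K" "v \<in> e" for e v
    proof -
      have "e \<notin> {e\<in>E. u \<in> e}" "e \<notin> {e\<in>E. w \<in> e}"
        using that(1) unfolding at_u at_w by auto
      then show ?thesis using that deg'[of v] by auto
    qed
  qed
  moreover have "(\<Sum>e\<in>?K. \<Prod>v\<in>e. deg E v) = 6 + 3 * deg E a + 3 * deg E c + 2 * deg E t"
    using distinct \<open>deg E w = 2\<close> \<open>deg E u = 3\<close> by (simp add: doubleton_eq_iff)
  moreover have "(\<Sum>e\<in>?K'. \<Prod>v\<in>e. deg E' v) = 4 + 4 * deg E a + 4 * deg E c + 4 * deg E t"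
    using distinct deg'_at by (simp add: doubleton_eq_iff)
  ultimately show ?thesis by simp
qed

lemma M2_rotate_edge_to_degree_three:
  assumes tree: "is_tree V E" and uw: "{u, w} \<in> E" and "deg E w = 2" "deg E u = 3"
  obtains E' where "is_tree V E'" "deg E' u = 4" "deg E' w = 1"
    "\<And>v. v \<noteq> u \<Longrightarrow> v \<noteq> w \<Longrightarrow> deg E' v = deg E v" "M2 E < M2 E'"
proof -
  have simple: "simple_graph V E" using tree by (simp add: is_tree_def)
  have wu: "{w, u} \<in> E" using uw by (simp add: insert_commute)
  obtain t where "{x. {w, x} \<in> E \<and> x \<noteq> u} = {t}"
    using incident_edges_other(2)[OF simple wu] \<open>deg E w = 2\<close> by (auto simp: card_1_singleton_iff)
  then have at_w: "{e\<in>E. w \<in> e} = {{u, w}, {w, t}}" and t: "{w, t} \<in> E" "t \<noteq> u"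
    using incident_edges_other(1)[OF simple wu] by (auto simp: insert_commute)
  obtain a c where "{x. {u, x} \<in> E \<and> x \<noteq> w} = {a, c}" "a \<noteq> c"
    using incident_edges_other(2)[OF simple uw] \<open>deg E u = 3\<close> by (auto simp: card_2_iff)
  then have at_u: "{e\<in>E. u \<in> e} = {{u, w}, {u, a}, {u, c}}" and ac: "{u, a} \<in> E" "a \<noteq> w" "c \<noteq> w"
    using incident_edges_other(1)[OF simple uw] by auto
  note rotate = tree_rotate_edge[OF tree uw t]
  have distinct: "distinct [u, w, a, c, t]"
    using simple_graph_edge_neq[OF simple] at_u uw ac t \<open>a \<noteq> c\<close> rotate(2) by auto
  have "0 < deg E a" "0 < deg E t"
    using deg_pos[OF simple] ac(1) t(1) by (simp_all add: insert_commute)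
  then have "M2 E < M2 ((E - {{w, t}}) \<union> {{u, t}})"
    using M2_rotate_edge[OF tree at_w at_u distinct] by simp
  then show ?thesis
    using rotate(3) \<open>deg E w = 2\<close> \<open>deg E u = 3\<close> by (intro that[OF rotate(1)]) auto
qed

section \<open>Rooted trees\<close>

locale rooted_tree = rooted_connected_graph +
  assumes card_edges: "card E = card V - 1"
begin

lemma tree: "is_tree V E"
  using simple connected root_in card_edges by (auto simp: is_tree_def)

lemma edges_eq_parent_edges: "E = (\<lambda>x. {x, parent x}) ` (V - {r})"
proof -
  have sub: "(\<lambda>x. {x, parent x}) ` (V - {r}) \<subseteq> E" using parent_edge by blast
  have "card ((\<lambda>x. {x, parent x}) ` (V - {r})) = card E"
    using card_image[OF inj_on_parent_edge] root_in finite_vertices card_edges by simp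
  then show ?thesis using card_subset_eq[OF finite_edges sub] by simp
qed

definition parent_step :: "('a \<times> 'a) set" where
  "parent_step = {(x, parent x) | x. x \<in> V \<and> x \<noteq> r}"

lemma parent_step_iff [simp]: "(x, y) \<in> parent_step \<longleftrightarrow> x \<in> V \<and> x \<noteq> r \<and> y = parent x"
  by (auto simp: parent_step_def)

lemma parent_steps_in: "(x, y) \<in> parent_step\<^sup>* \<Longrightarrow> x \<in> V \<Longrightarrow> y \<in> V"
  by (induction rule: rtrancl_induct) (auto intro: parent_in)

lemma depth_parent_steps_le: "(x, y) \<in> parent_step\<^sup>* \<Longrightarrow> depth y \<le> depth x"
  by (induction rule: rtrancl_induct) (auto dest!: depth_parent)

lemma parent_steps_neqD:
  assumes "(x, y) \<in> parent_step\<^sup>*" "x \<noteq> y"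
  shows "x \<in> V" "x \<noteq> r" "depth y < depth x"
proof -
  obtain z where "(x, z) \<in> parent_step" "(z, y) \<in> parent_step\<^sup>*"
    using assms by (metis converse_rtranclE)
  then show "x \<in> V" "x \<noteq> r" "depth y < depth x"
    using depth_parent[of x] depth_parent_steps_le[of z y] by auto
qed

lemma exists_child:
  assumes "c \<in> V" "c \<noteq> r" "2 \<le> deg E c"
  obtains d where "d \<in> V" "d \<noteq> r" "parent d = c"
proof -
  have "{e\<in>E. c \<in> e} \<noteq> {{c, parent c}}"
  proof
    assume "{e\<in>E. c \<in> e} = {{c, parent c}}"
    then have "deg E c = 1" by (simp add: deg_def)
    with assms(3) show False by simp
  qed
  moreover have "{c, parent c} \<in> {e\<in>E. c \<in> e}" using parent_edge[OF assms(1,2)] by simp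
  ultimately obtain e where "e \<in> E" "c \<in> e" "e \<noteq> {c, parent c}" by blast
  then obtain x where "x \<in> V" "x \<noteq> r" "e = {x, parent x}" using edges_eq_parent_edges by blast
  then show ?thesis using that \<open>c \<in> e\<close> \<open>e \<noteq> {c, parent c}\<close> by auto
qed

lemma parent_steps_adj_rel_rtrancl:
  assumes "(x, y) \<in> parent_step\<^sup>*"
    and "\<And>z. (x, z) \<in> parent_step\<^sup>* \<Longrightarrow> (z, y) \<in> parent_step\<^sup>* \<Longrightarrow> z \<noteq> y
      \<Longrightarrow> {z, parent z} \<in> E'"
  shows "(x, y) \<in> (adj_rel E')\<^sup>*"
  using assms
proof (induction rule: converse_rtrancl_induct)
  case (step x z)
  have "x \<noteq> y" using step.hyps depth_parent[of x] depth_parent_steps_le[of z y] by auto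
  then have "{x, z} \<in> E'"
    using step.prems[of x] step.hyps converse_rtrancl_into_rtrancl[OF step.hyps] by auto
  moreover have "(z, y) \<in> (adj_rel E')\<^sup>*"
    using step.IH step.prems step.hyps(1) by (meson converse_rtrancl_into_rtrancl)
  ultimately show ?case by (meson adj_rel_iff converse_rtrancl_into_rtrancl)
qed simp

text \<open>The tree path from c up to b avoids both removed edges, so it reconnects the two cuts.\<close>

lemma swap_parent_edges:
  assumes b: "b \<in> V" "b \<noteq> r" "parent b = a" and d: "d \<in> V" "d \<noteq> r" "parent d = c"
    and c_below_b: "(c, b) \<in> parent_step\<^sup>*" "c \<noteq> b"
  defines "E' \<equiv> (E - {{a, b}, {c, d}}) \<union> {{a, c}, {b, d}}"
  shows "is_tree V E'" "\<forall>v. deg E' v = deg E v"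
    "M2 E' + deg E a * deg E b + deg E c * deg E d = M2 E + deg E a * deg E c + deg E b * deg E d"
proof -
  let ?R = "{{a, b}, {c, d}}" and ?A = "{{a, c}, {b, d}}"
  have depths: "depth a < depth b" "depth b < depth c" "depth c < depth d"
    using depth_parent[OF b(1,2)] depth_parent[OF d(1,2)] parent_steps_neqD[OF c_below_b] b d
    by auto
  then have distinct: "distinct [a, b, c, d]" by auto
  have R: "?R \<subseteq> E" using parent_edge[OF b(1,2)] parent_edge[OF d(1,2)] b d by (auto simp: insert_commute)
  have "(c, b) \<in> (adj_rel E')\<^sup>*"
  proof (rule parent_steps_adj_rel_rtrancl[OF c_below_b(1)])
    fix z assume "(c, z) \<in> parent_step\<^sup>*" "(z, b) \<in> parent_step\<^sup>*" "z \<noteq> b"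
    then have "z \<in> V" "z \<noteq> r" "depth b < depth z" "depth z \<le> depth c"
      using parent_steps_neqD depth_parent_steps_le by blast+
    then show "{z, parent z} \<in> E'"
      using parent_edge depth_parent[of z] depths b d by (auto simp: E'_def doubleton_eq_iff)
  qed
  moreover have "(a, c) \<in> adj_rel E'" "(b, d) \<in> adj_rel E'" by (auto simp: E'_def)
  ultimately have "(a, b) \<in> (adj_rel E')\<^sup>*" "(c, d) \<in> (adj_rel E')\<^sup>*"
    by (meson converse_rtrancl_into_rtrancl rtrancl_into_rtrancl)+
  then have connected': "connected_graph V E'"
    by (intro connected_graph_transfer[OF connected]) (auto simp: E'_def)
  have simple': "simple_graph V E'"
    using simple b d parent_in distinct unfolding simple_graph_def E'_def by auto
  have "card ?A \<le> card ?R" using distinct by (simp add: doubleton_eq_iff)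
  note exchange = tree_edge_exchange[OF tree R this simple'[unfolded E'_def] connected'[unfolded E'_def]]
  then show "is_tree V E'" by (simp add: E'_def)
  have deg_eq: "deg E' v = deg E v" for v
  proof -
    have "card {e\<in>?R. v \<in> e} = card {e\<in>?A. v \<in> e}"
      using distinct by (simp only: card_incident_eq_sum finite.intros) (auto simp: doubleton_eq_iff)
    then show ?thesis using deg_edge_exchange[OF finite_edges _ R exchange(2), of v] by (simp add: E'_def)
  qed
  then show "\<forall>v. deg E' v = deg E v" by simp
  have "M2 E' + (\<Sum>e\<in>?R. \<Prod>v\<in>e. deg E v) = M2 E + (\<Sum>e\<in>?A. \<Prod>v\<in>e. deg E' v)"
  proof (rule M2_edge_exchange[OF finite_edges _ R])
    show "finite E'" "?A \<subseteq> E'" using finite_edges by (auto simp: E'_def)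
    show "E - ?R = E' - ?A" using exchange(2) by (auto simp: E'_def)
  qed (simp add: deg_eq)
  then show "M2 E' + deg E a * deg E b + deg E c * deg E d = M2 E + deg E a * deg E c + deg E b * deg E d"
    using distinct by (simp add: deg_eq doubleton_eq_iff)
qed

lemma exists_ancestor_with_parent_in:
  assumes "r \<in> S" "v \<in> V" "(v, z) \<in> parent_step\<^sup>*" "z \<notin> S"
  obtains b where "(v, b) \<in> parent_step\<^sup>*" "b \<notin> S" "b \<noteq> r" "parent b \<in> S"
proof -
  have "\<exists>b. (v, b) \<in> parent_step\<^sup>* \<and> b \<notin> S \<and> b \<noteq> r \<and> parent b \<in> S"
    using assms(3,4)
  proof (induction "depth z" arbitrary: z rule: less_induct)
    case less
    have z: "z \<in> V" "z \<noteq> r" using parent_steps_in[OF less.prems(1) assms(2)] less.prems(2) assms(1) by auto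
    show ?case
    proof (cases "parent z \<in> S")
      case True
      then show ?thesis using less.prems z by blast
    next
      case False
      have "(v, parent z) \<in> parent_step\<^sup>*" using less.prems(1) z by (simp add: rtrancl.rtrancl_into_rtrancl)
      then show ?thesis using less.hyps[OF _ _ False] depth_parent[OF z] by simp
    qed
  qed
  then show ?thesis using that by blast
qed

lemma exists_descendant_with_parent_in:
  assumes "(v, b) \<in> parent_step\<^sup>*" "v \<in> S" "b \<notin> S"
    and deg_S: "\<And>x. x \<in> S \<Longrightarrow> 2 \<le> deg E x"
  obtains d where "d \<in> V" "d \<noteq> r" "d \<notin> S" "parent d \<in> S" "(parent d, b) \<in> parent_step\<^sup>*"
proof -
  let ?C = "{c\<in>V. c \<in> S \<and> (c, b) \<in> parent_step\<^sup>*}"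
  have "finite ?C" using finite_vertices by simp
  moreover have "v \<in> ?C" using assms(1-3) parent_steps_neqD[OF assms(1)] by auto
  ultimately obtain c where c: "c \<in> ?C" "Max (depth ` ?C) = depth c"
    using obtains_MAX[of ?C depth] by blast
  have deepest: "depth x \<le> depth c" if "x \<in> ?C" for x
    using Max_ge[OF finite_imageI[OF \<open>finite ?C\<close>] imageI[OF that], of depth] c(2) by simp
  have "c \<noteq> b" using c(1) assms(3) by auto
  then have "c \<noteq> r" using parent_steps_neqD c(1) by blast
  then obtain d where d: "d \<in> V" "d \<noteq> r" "parent d = c"
    using exists_child c(1) deg_S by blast
  have "(d, c) \<in> parent_step" using d by simp
  then have "(d, b) \<in> parent_step\<^sup>*" using c(1) by (simp add: converse_rtrancl_into_rtrancl)
  moreover have "depth c < depth d" using depth_parent[OF d(1,2)] d(3) by simp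
  ultimately have "d \<notin> S" using deepest[of d] d(1) by auto
  then show ?thesis using that d c(1) by blast
qed

lemma deg_parent_eq_4_if_M2_maximal:
  assumes deg_le_4: "\<forall>x\<in>V. deg E x \<le> 4" and "deg E r = 4"
    and maximal: "\<And>E'. is_tree V E' \<Longrightarrow> \<forall>x. deg E' x = deg E x \<Longrightarrow> M2 E' \<le> M2 E"
    and v: "v \<in> V" "v \<noteq> r" "deg E v = 4"
  shows "deg E (parent v) = 4"
proof (rule ccontr)
  let ?S = "{x\<in>V. deg E x = 4}"
  assume "deg E (parent v) \<noteq> 4"
  moreover have "(v, parent v) \<in> parent_step\<^sup>*" using v by auto
  ultimately obtain b where b: "(v, b) \<in> parent_step\<^sup>*" "b \<notin> ?S" "b \<noteq> r" "parent b \<in> ?S"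
    using exists_ancestor_with_parent_in[of ?S v "parent v"] assms(2) root_in v by auto
  have "b \<in> V" using parent_steps_in[OF b(1) v(1)] .
  obtain d where d: "d \<in> V" "d \<noteq> r" "d \<notin> ?S" "parent d \<in> ?S" "(parent d, b) \<in> parent_step\<^sup>*"
    using exists_descendant_with_parent_in[OF b(1) _ b(2)] v by auto
  have "parent d \<noteq> b" using b(2) d(4) by blast
  note swap = swap_parent_edges[OF \<open>b \<in> V\<close> b(3) refl d(1,2) refl d(5) this]
  have "deg E b < 4" "deg E d < 4"
    using deg_le_4 b(2) d(1,3) \<open>b \<in> V\<close> by (simp_all add: order.strict_iff_order)
  then have "4 * deg E b + 4 * deg E d < 16 + deg E b * deg E d"
    by (simp add: less_Suc_eq numeral_eq_Suc, elim disjE) simp_all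
  then have "M2 E < M2 ((E - {{parent b, b}, {parent d, d}}) \<union> {{parent b, parent d}, {b, d}})"
    using swap(3) b(4) d(4) by simp
  with maximal[OF swap(1,2)] show False by simp
qed

lemma induced_subtree:
  assumes "r \<in> S" "S \<subseteq> V" and closed: "\<And>x. x \<in> S \<Longrightarrow> x \<noteq> r \<Longrightarrow> parent x \<in> S"
  shows "is_tree S (induced_edges E S)"
proof -
  have edges: "induced_edges E S = (\<lambda>x. {x, parent x}) ` (S - {r})"
  proof
    show "(\<lambda>x. {x, parent x}) ` (S - {r}) \<subseteq> induced_edges E S"
      using parent_edge closed assms(2) by (auto simp: induced_edges_def)
    show "induced_edges E S \<subseteq> (\<lambda>x. {x, parent x}) ` (S - {r})"
    proof
      fix e assume "e \<in> induced_edges E S"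
      then have "e \<in> (\<lambda>x. {x, parent x}) ` (V - {r})" "e \<subseteq> S"
        using edges_eq_parent_edges by (auto simp: induced_edges_def)
      then show "e \<in> (\<lambda>x. {x, parent x}) ` (S - {r})" by auto
    qed
  qed
  have "finite S" using assms(2) finite_vertices finite_subset by blast
  then have simple': "simple_graph S (induced_edges E S)"
    using simple unfolding simple_graph_def induced_edges_def by auto
  have to_root: "(x, r) \<in> (adj_rel (induced_edges E S))\<^sup>*" if "x \<in> S" for x
    using that
  proof (induction "depth x" arbitrary: x rule: less_induct)
    case less
    show ?case
    proof (cases "x = r")
      case False
      have "(parent x, r) \<in> (adj_rel (induced_edges E S))\<^sup>*"
        using less closed False depth_parent[of x] assms(2) by auto
      moreover have "(x, parent x) \<in> adj_rel (induced_edges E S)"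
        using edges less.prems False by auto
      ultimately show ?thesis by (meson converse_rtrancl_into_rtrancl)
    qed simp
  qed
  then have connected': "connected_graph S (induced_edges E S)"
    unfolding connected_graph_def by (meson adj_rel_rtrancl_sym rtrancl_trans)
  have "inj_on (\<lambda>x. {x, parent x}) (S - {r})"
    using inj_on_parent_edge by (rule inj_on_subset) (use assms(2) in blast)
  then have "card (induced_edges E S) = card S - 1"
    unfolding edges using assms(1) \<open>finite S\<close> by (simp add: card_image)
  then show ?thesis using simple' connected' assms(1) unfolding is_tree_def by auto
qed

end

section \<open>Chemical trees of maximum M2\<close>

lemma tree_card_le_if_no_degree_two:
  assumes tree: "is_tree V E" and "\<forall>v\<in>V. deg E v \<le> 3" "\<forall>v\<in>V. deg E v \<noteq> 2"
  shows "card V \<le> 2 * card (branching_vertices V E) + 2"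
proof -
  let ?B = "branching_vertices V E"
  have simple: "simple_graph V E" and "V \<noteq> {}" and card_E: "card E = card V - 1"
    using tree by (auto simp: is_tree_def)
  have fin: "finite V" "?B \<subseteq> V" using simple by (auto simp: simple_graph_def branching_vertices_def)
  have "2 * (card V - 1) = (\<Sum>v\<in>V. deg E v)"
    using sum_deg_eq_twice_card_edges[OF simple] card_E by simp
  also have "\<dots> \<le> (\<Sum>v\<in>V. if v \<in> ?B then 3 else 1)"
    using assms(2,3) by (intro sum_mono) (fastforce simp: branching_vertices_def)
  also have "\<dots> = 3 * card ?B + (card V - card ?B)"
    using fin by (simp add: sum.If_cases Int_absorb1 card_Diff_subset Diff_eq[symmetric] finite_subset)
  finally show ?thesis using \<open>V \<noteq> {}\<close> fin card_mono[OF fin] by (simp add: card_gt_0_iff)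
qed

text \<open>A crossing edge out of the set of degree-2 vertices, enlarged by the leaves hanging at
  them, necessarily joins a degree-2 vertex to a degree-3 vertex.\<close>

lemma connected_graph_edge_degree_two_three:
  assumes simple: "simple_graph V E" and connected: "connected_graph V E"
    and "\<forall>v\<in>V. deg E v \<le> 3" "w \<in> V" "deg E w = 2" "u \<in> V" "deg E u = 3"
  obtains x y where "{x, y} \<in> E" "deg E x = 2" "deg E y = 3"
proof -
  define X where "X = {v\<in>V. deg E v = 2 \<or> (deg E v \<le> 1 \<and> (\<exists>z. {v, z} \<in> E \<and> deg E z = 2))}"
  have "w \<in> X" "u \<notin> X" using assms(4-7) by (auto simp: X_def)
  then obtain x y where xy: "{x, y} \<in> E" "x \<in> X" "y \<notin> X"
    using connected_graph_crossing_edge[OF connected assms(4,6)] by blast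
  have "y \<in> V" using simple_graph_edge_in[OF simple xy(1)] by simp
  show thesis
  proof (cases "deg E x = 2")
    case True
    then have "deg E y \<noteq> 2" "\<not> deg E y \<le> 1" using xy \<open>y \<in> V\<close> by (auto simp: X_def insert_commute)
    then show thesis using that[OF xy(1) True] assms(3) \<open>y \<in> V\<close> by fastforce
  next
    case False
    then obtain z where z: "deg E x \<le> 1" "{x, z} \<in> E" "deg E z = 2" using xy(2) by (auto simp: X_def)
    have "finite {e\<in>E. x \<in> e}" using simple_graph_finite_edges[OF simple] by simp
    moreover have "{x, y} \<in> {e\<in>E. x \<in> e}" "{x, z} \<in> {e\<in>E. x \<in> e}" using xy(1) z(2) by auto
    ultimately have "{x, y} = {x, z}" using z(1) card_le_Suc0_iff_eq unfolding deg_def by (metis One_nat_def)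
    then have "y = z" using simple_graph_edge_neq[OF simple xy(1)] by (auto simp: doubleton_eq_iff)
    then show thesis using xy(3) z(3) \<open>y \<in> V\<close> by (simp add: X_def)
  qed
qed

lemma M2_maximal_tree_has_degree_four:
  assumes tree: "is_tree V E" and deg_le_4: "\<forall>v\<in>V. deg E v \<le> 4"
    and "branching_vertices V E \<noteq> {}" "2 * card (branching_vertices V E) + 2 < card V"
    and maximal: "\<And>E'. is_tree V E' \<Longrightarrow> \<forall>v\<in>V. deg E' v \<le> 4
      \<Longrightarrow> branching_vertices V E' = branching_vertices V E \<Longrightarrow> M2 E' \<le> M2 E"
  shows "\<exists>v\<in>V. deg E v = 4"
proof (rule ccontr)
  assume "\<not> ?thesis"
  then have deg_le_3: "\<forall>v\<in>V. deg E v \<le> 3" using deg_le_4 by force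
  have simple: "simple_graph V E" and connected: "connected_graph V E"
    using tree by (auto simp: is_tree_def)
  obtain w where w: "w \<in> V" "deg E w = 2"
    using tree_card_le_if_no_degree_two[OF tree deg_le_3] assms(4) by force
  obtain u where u: "u \<in> V" "deg E u = 3"
    using assms(3) deg_le_3 by (force simp: branching_vertices_def)
  obtain x y where "{x, y} \<in> E" "deg E x = 2" "deg E y = 3"
    using connected_graph_edge_degree_two_three[OF simple connected deg_le_3 w u] .
  moreover from this have "{y, x} \<in> E" by (simp add: insert_commute)
  ultimately obtain E' where E': "is_tree V E'" "deg E' y = 4" "deg E' x = 1"
      "\<And>v. v \<noteq> y \<Longrightarrow> v \<noteq> x \<Longrightarrow> deg E' v = deg E v" "M2 E < M2 E'"
    using M2_rotate_edge_to_degree_three[OF tree] by blast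
  have "deg E' v = (if v = y then 4 else if v = x then 1 else deg E v)" for v
    using E'(2-4) by auto
  then have "\<forall>v\<in>V. deg E' v \<le> 4" "branching_vertices V E' = branching_vertices V E"
    using deg_le_4 \<open>deg E x = 2\<close> \<open>deg E y = 3\<close> by (auto simp: branching_vertices_def)
  then show False using maximal[OF E'(1)] E'(5) by simp
qed

theorem lemma14:
  fixes n b :: nat and V :: "'a set" and E :: "'a set set"
  assumes "1 \<le> b" and "real b < real n / 2 - 1"
    and "(V, E) \<in> CT_star n b"
    and "\<forall>(V' :: 'a set, E') \<in> CT_star n b. M2 E' \<le> M2 E"
  shows "(\<exists>v\<in>V. deg E v = 4)
       \<and> is_tree {v\<in>V. deg E v = 4} (induced_edges E {v\<in>V. deg E v = 4})"
proof -
  have tree: "is_tree V E" and deg_le_4: "\<forall>v\<in>V. deg E v \<le> 4"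
    and card: "card V = n" "card (branching_vertices V E) = b"
    using assms(3) by (auto simp: CT_star_def chemical_tree_def)
  have maximal: "M2 E' \<le> M2 E" if "is_tree V E'" "\<forall>v\<in>V. deg E' v \<le> 4"
    "branching_vertices V E' = branching_vertices V E" for E'
  proof -
    have "(V, E') \<in> CT_star n b" using that card by (simp add: CT_star_def chemical_tree_def)
    then show ?thesis using assms(4) by blast
  qed
  have "\<exists>v\<in>V. deg E v = 4"
    using M2_maximal_tree_has_degree_four[OF tree deg_le_4 _ _ maximal] assms(1,2) card by fastforce
  then obtain r where "r \<in> V" "deg E r = 4" by blast
  interpret rooted_tree V E r
    using tree \<open>r \<in> V\<close> by unfold_locales (auto simp: is_tree_def)
  have "deg E (parent v) = 4" if "v \<in> V" "v \<noteq> r" "deg E v = 4" for v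
    using deg_parent_eq_4_if_M2_maximal[OF deg_le_4 \<open>deg E r = 4\<close> _ that] maximal deg_le_4
    by (simp add: branching_vertices_def)
  then have "is_tree {v\<in>V. deg E v = 4} (induced_edges E {v\<in>V. deg E v = 4})"
    using \<open>r \<in> V\<close> \<open>deg E r = 4\<close> parent_in by (intro induced_subtree) auto
  with \<open>\<exists>v\<in>V. deg E v = 4\<close> show ?thesis ..
qed

end
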